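(* With $W=C^0_+\oplus E_0\oplus C^0_-$ and $\mathcal{T}=E+iC^0$, one has (1) $W=\{x\in E:\ e^{zh}x\in\mathcal{T}\text{ for all }z\in\mathcal{S}_\pi\}$; (2) $\overline W=\{x\in E:\ e^{zh}x\in E+iC\text{ for all }z\in\mathcal{S}_\pi\}$, where $e^{zh}$ denotes the complex linear extension to $E_\mathbb{C}$ and $\mathcal{S}_\pi=\{z\in\mathbb{C}:0<\operatorname{Im}z<\pi\}$.
   Context: $E$ finite-dimensional real vector space; $h\in\mathrm{End}(E)$ diagonalizable with eigenvalues in $\{-1,0,1\}$, $E_j=\ker(h-j)$; $\tau=e^{\pi ih}$; $C$ pointed generating closed convex cone invariant under $e^{\mathbb{R}h}$ and under $-\tau$, interior $C^0$; $C_\pm=\pm C\cap E_{\pm1}$ with interiors $C_\pm^0$ relative to $E_{\pm1}$. *)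

theory Defs
  imports "HOL-Analysis.Analysis"
begin

text \<open>The complexification E_C of E is modelled as pairs (u,v) standing for u + i v.\<close>

definition eigsp :: "('a::real_vector \<Rightarrow> 'a) \<Rightarrow> real \<Rightarrow> 'a set" where
  "eigsp h j = {x. h x = j *\<^sub>R x}"

definition rexp_op :: "real \<Rightarrow> ('a::real_normed_vector \<Rightarrow> 'a) \<Rightarrow> 'a \<Rightarrow> 'a" where
  "rexp_op t h x = (\<Sum>n. (t ^ n / fact n) *\<^sub>R (h ^^ n) x)"

definition cexp_op :: "complex \<Rightarrow> ('a::real_normed_vector \<Rightarrow> 'a) \<Rightarrow> 'a \<times> 'a \<Rightarrow> 'a \<times> 'a" where
  "cexp_op z h p =
     ((\<Sum>n. Re (z ^ n / fact n) *\<^sub>R (h ^^ n) (fst p) - Im (z ^ n / fact n) *\<^sub>R (h ^^ n) (snd p)),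
      (\<Sum>n. Im (z ^ n / fact n) *\<^sub>R (h ^^ n) (fst p) + Re (z ^ n / fact n) *\<^sub>R (h ^^ n) (snd p)))"

definition strip_pi :: "complex set" where
  "strip_pi = {z. 0 < Im z \<and> Im z < pi}"

end

theory Submission
  imports Defs
begin

text \<open>Write \<open>x = x\<^sub>- + x\<^sub>0 + x\<^sub>+\<close> along the eigenspaces of \<open>h\<close>. Then
  \<open>Im (e\<^bsup>zh\<^esup> x) = e\<^bsup>Re z\<^esup> sin (Im z) (x\<^sub>+ - e\<^bsup>-2 Re z\<^esup> x\<^sub>-)\<close>, and as \<open>z\<close> runs
  through the strip these are exactly the positive multiples of \<open>x\<^sub>+ - r x\<^sub>-\<close>, \<open>r > 0\<close>.
  Both conditions are therefore about when a difference \<open>w - u\<close> with \<open>w \<in> E\<^sub>1\<close>,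
  \<open>u \<in> E\<^sub>-\<^sub>1\<close> lies in \<open>C\<close>, resp. \<open>C\<^sup>0\<close>.

  Since \<open>C\<close> is closed and invariant under \<open>e\<^bsup>th\<^esup>\<close>, letting \<open>t \<rightarrow> \<plusminus>\<infinity>\<close> shows that the
  projections onto \<open>E\<^sub>1\<close> and \<open>E\<^sub>-\<^sub>1\<close> map \<open>C\<close> into itself, so \<open>w - u \<in> C\<close> iff
  \<open>w \<in> C\<^sub>+\<close> and \<open>u \<in> C\<^sub>-\<close>. The reflection \<open>-\<tau>\<close> is the identity on
  \<open>E\<^sub>1 \<oplus> E\<^sub>-\<^sub>1\<close> and \<open>-1\<close> on \<open>E\<^sub>0\<close>, so averaging a point of \<open>C\<^sup>0\<close> with its reflection
  shows that \<open>C\<^sup>0\<close> meets \<open>E\<^sub>1 \<oplus> E\<^sub>-\<^sub>1\<close>. Hence \<open>C\<^sup>0 \<inter> (E\<^sub>1 \<oplus> E\<^sub>-\<^sub>1)\<close> is the relative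
  interior of \<open>C \<inter> (E\<^sub>1 \<oplus> E\<^sub>-\<^sub>1) = C\<^sub>+ - C\<^sub>-\<close>, namely \<open>C\<^sub>+\<^sup>0 - C\<^sub>-\<^sup>0\<close>.
  Finally \<open>W\<close> and its closure are the preimages of the relative interior of \<open>C\<^sub>+ \<times> C\<^sub>-\<close>
  and of \<open>C\<^sub>+ \<times> C\<^sub>-\<close> itself under \<open>x \<mapsto> (x\<^sub>+, x\<^sub>-)\<close>.\<close>

lemma exp_series_sums: "(\<lambda>n. z ^ n / fact n) sums exp (z::complex)"
  using exp_converges[of z] by (simp add: divide_inverse scaleR_conv_of_real mult.commute)

lemma linear_funpow:
  fixes h :: "'a::real_vector \<Rightarrow> 'a"
  assumes "linear h"
  shows "linear (h ^^ n)"
proof (induction n)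
  case 0
  show ?case by (simp add: linear_iff)
next
  case (Suc n)
  show ?case using linear_compose[OF Suc.IH assms] by (simp only: funpow.simps(2))
qed

lemma subspace_eigsp: "linear h \<Longrightarrow> subspace (eigsp h c)"
  unfolding subspace_def eigsp_def
  by (auto simp: linear_add linear_scale linear_0 algebra_simps)

lemma funpow_eigsp:
  assumes "linear h" "x \<in> eigsp h c"
  shows "(h ^^ n) x = (c ^ n) *\<^sub>R x"
  using assms by (induction n) (auto simp: eigsp_def linear_scale)

lemma eigsp_exp_series_sums:
  fixes h :: "'a::real_normed_vector \<Rightarrow> 'a" and z :: complex
  assumes "bounded_linear f" "linear h" "x \<in> eigsp h c"
  shows "(\<lambda>n. f (z ^ n / fact n) *\<^sub>R (h ^^ n) x) sums (f (exp (of_real c * z)) *\<^sub>R x)"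
proof -
  have scale: "f ((of_real c * z) ^ n / fact n) = f (z ^ n / fact n) * c ^ n" for n
  proof -
    have "(of_real c * z) ^ n / fact n = (c ^ n) *\<^sub>R (z ^ n / fact n)"
      unfolding power_mult_distrib scaleR_conv_of_real of_real_power by simp
    then show ?thesis
      by (simp add: linear_scale[OF bounded_linear.linear[OF assms(1)]] mult.commute)
  qed
  have "(\<lambda>n. f ((of_real c * z) ^ n / fact n) *\<^sub>R x) sums (f (exp (of_real c * z)) *\<^sub>R x)"
    by (intro sums_scaleR_left bounded_linear.sums[OF assms(1)] exp_series_sums)
  then show ?thesis
    unfolding scale by (simp add: funpow_eigsp[OF assms(2,3)])
qed

lemma rexp_op_eq_fst_cexp_op:
  fixes h :: "'a::real_normed_vector \<Rightarrow> 'a"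
  shows "rexp_op t h x = fst (cexp_op (of_real t) h (x, 0))"
proof -
  have "Re (of_real t ^ n / fact n) = t ^ n / fact n" "Im (of_real t ^ n / fact n) = 0" for n
    by (metis of_real_divide of_real_fact of_real_power Re_complex_of_real,
        metis of_real_divide of_real_fact of_real_power Im_complex_of_real)
  then show ?thesis by (simp add: rexp_op_def cexp_op_def)
qed

lemma strip_pi_iff:
  fixes u w :: "'a::real_vector"
  assumes scale: "\<And>c y. 0 < c \<Longrightarrow> y \<in> S \<Longrightarrow> c *\<^sub>R y \<in> S"
  shows "(\<forall>z\<in>strip_pi. Im (exp (- z)) *\<^sub>R u + Im (exp z) *\<^sub>R w \<in> S) \<longleftrightarrow> (\<forall>r>0. w - r *\<^sub>R u \<in> S)"
proof -
  have factor: "Im (exp (- z)) *\<^sub>R u + Im (exp z) *\<^sub>R w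
      = (exp (Re z) * sin (Im z)) *\<^sub>R (w - exp (-2 * Re z) *\<^sub>R u)" for z
  proof -
    have "exp (Re z) * exp (-2 * Re z) = exp (- Re z)"
      by (simp flip: exp_add)
    then show ?thesis
      by (simp add: Im_exp scaleR_diff_right algebra_simps)
  qed
  show ?thesis
  proof
    assume strip: "\<forall>z\<in>strip_pi. Im (exp (- z)) *\<^sub>R u + Im (exp z) *\<^sub>R w \<in> S"
    show "\<forall>r>0. w - r *\<^sub>R u \<in> S"
    proof (intro allI impI)
      fix r :: real
      assume "r > 0"
      define z where "z = Complex (- ln r / 2) (pi / 2)"
      have "z \<in> strip_pi" "exp (-2 * Re z) = r" "sin (Im z) = 1"
        using \<open>r > 0\<close> by (simp_all add: z_def strip_pi_def)
      then have "exp (Re z) *\<^sub>R (w - r *\<^sub>R u) \<in> S"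
        using strip factor[of z] by force
      then show "w - r *\<^sub>R u \<in> S"
        using scale[of "inverse (exp (Re z))" "exp (Re z) *\<^sub>R (w - r *\<^sub>R u)"] by simp
    qed
  next
    assume "\<forall>r>0. w - r *\<^sub>R u \<in> S"
    moreover have "exp (Re z) * sin (Im z) > 0" if "z \<in> strip_pi" for z
      using that by (simp add: strip_pi_def sin_gt_zero)
    ultimately show "\<forall>z\<in>strip_pi. Im (exp (- z)) *\<^sub>R u + Im (exp z) *\<^sub>R w \<in> S"
      unfolding factor using scale by simp
  qed
qed

lemma closed_mem_of_right_limit:
  fixes f :: "real \<Rightarrow> 'a::topological_space"
  assumes "closed S" "continuous (at_right 0) f" "\<And>s. 0 < s \<Longrightarrow> s < 1 \<Longrightarrow> f s \<in> S"
  shows "f 0 \<in> S"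
proof (rule Lim_in_closed_set[OF assms(1)])
  show "\<forall>\<^sub>F s in at_right 0. f s \<in> S"
    by (rule eventually_mono[OF eventually_at_right_real[of 0 1]]) (use assms(3) in auto)
  show "(f \<longlongrightarrow> f 0) (at_right 0)"
    using assms(2) by (simp add: continuous_within)
qed simp

lemma convex_cone_Int: "convex_cone S \<Longrightarrow> convex_cone T \<Longrightarrow> convex_cone (S \<inter> T)"
  using convex_cone_Inter[of "{S, T}"] by auto

lemma rel_interior_cone_scaleR:
  fixes S :: "'a::euclidean_space set"
  assumes "cone S" "0 < c" "y \<in> rel_interior S"
  shows "c *\<^sub>R y \<in> rel_interior S"
proof -
  have "c *\<^sub>R y \<in> {0} \<union> rel_interior S"
    using cone_rel_interior[OF assms(1)] assms(2,3) unfolding cone_def by (meson UnI2 less_imp_le)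
  then show ?thesis
    using assms(2,3) by (cases "y = 0") auto
qed

lemma affine_hull_eq_subspace:
  fixes S :: "'a::euclidean_space set"
  assumes "subspace E" "S \<subseteq> E" "0 \<in> S" "\<And>y. y \<in> E \<Longrightarrow> \<exists>a\<in>S. \<exists>b\<in>S. y = a - b"
  shows "affine hull S = E"
proof -
  have "E \<subseteq> span S"
    using assms(4) by (fastforce intro: span_diff span_base)
  then have "span S = E"
    using span_subspace[OF assms(2) _ assms(1)] by blast
  then show ?thesis
    using affine_hull_span_0[OF hull_inc[OF assms(3)]] by simp
qed

lemma interior_of_affine_hull: "top_of_set (affine hull S) interior_of S = rel_interior S"
  by (simp add: rel_interior_def interior_of_def)

lemma closure_vimage_rel_interior:
  fixes f :: "'a::euclidean_space \<Rightarrow> 'b::euclidean_space"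
  assumes f: "linear f" and A: "convex A" and x0: "f x0 \<in> rel_interior A"
  shows "closure (f -` rel_interior A) = f -` closure A"
proof
  have "closed (f -` closure A)"
    using continuous_closed_vimage[OF closed_closure] linear_continuous_at[OF linear_conv_bounded_linear[THEN iffD1, OF f]]
    by blast
  then show "closure (f -` rel_interior A) \<subseteq> f -` closure A"
    by (meson closure_minimal closure_subset rel_interior_subset subset_trans vimage_mono)
next
  show "f -` closure A \<subseteq> closure (f -` rel_interior A)"
  proof
    fix x
    assume x: "x \<in> f -` closure A"
    let ?g = "\<lambda>s. x - s *\<^sub>R (x - x0)"
    have "?g s \<in> f -` rel_interior A" if "0 < s" "s < 1" for s
      using rel_interior_closure_convex_shrink[OF A x0, of "f x" s] x that
      by (simp add: linear_diff[OF f] linear_scale[OF f])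
    moreover have "continuous (at_right 0) ?g"
      by (intro continuous_intros)
    ultimately have "?g 0 \<in> closure (f -` rel_interior A)"
      by (intro closed_mem_of_right_limit[of _ ?g]) (auto intro: closure_subset[THEN subsetD])
    then show "x \<in> closure (f -` rel_interior A)"
      by simp
  qed
qed

locale euler_operator =
  fixes h :: "'a::euclidean_space \<Rightarrow> 'a"
  assumes linear_h: "linear h"
    and eigsp_decomposition:
      "\<forall>x. \<exists>u v w. x = u + v + w \<and> u \<in> eigsp h (-1) \<and> v \<in> eigsp h 0 \<and> w \<in> eigsp h 1"
begin

text \<open>The spectral projections onto \<open>E\<^sub>-\<^sub>1\<close>, \<open>E\<^sub>0\<close>, \<open>E\<^sub>1\<close> are the Lagrange interpolation
  polynomials of the eigenvalues \<open>-1, 0, 1\<close>, evaluated at \<open>h\<close>.\<close>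

definition Pm :: "'a \<Rightarrow> 'a" where "Pm x = (1/2) *\<^sub>R (h (h x) - h x)"
definition P0 :: "'a \<Rightarrow> 'a" where "P0 x = x - h (h x)"
definition P1 :: "'a \<Rightarrow> 'a" where "P1 x = (1/2) *\<^sub>R (h (h x) + h x)"

lemma proj_of_sum:
  assumes "u \<in> eigsp h (-1)" "v \<in> eigsp h 0" "w \<in> eigsp h 1"
  shows "Pm (u + v + w) = u" "P0 (u + v + w) = v" "P1 (u + v + w) = w"
proof -
  have "h u = - u" "h v = 0" "h w = w"
    using assms by (auto simp: eigsp_def)
  then have hsum: "h (u + v + w) = w - u" and hdiff: "h (w - u) = w + u"
    by (simp_all add: linear_add[OF linear_h] linear_diff[OF linear_h])
  show "Pm (u + v + w) = u" "P0 (u + v + w) = v" "P1 (u + v + w) = w"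
    unfolding Pm_def P0_def P1_def hsum hdiff by (simp_all add: algebra_simps flip: scaleR_2)
qed

lemma proj_mem: "Pm x \<in> eigsp h (-1)" "P0 x \<in> eigsp h 0" "P1 x \<in> eigsp h 1"
  and proj_sum: "Pm x + P0 x + P1 x = x"
proof -
  obtain u v w where "x = u + v + w" "u \<in> eigsp h (-1)" "v \<in> eigsp h 0" "w \<in> eigsp h 1"
    using eigsp_decomposition by blast
  then show "Pm x \<in> eigsp h (-1)" "P0 x \<in> eigsp h 0" "P1 x \<in> eigsp h 1" "Pm x + P0 x + P1 x = x"
    using proj_of_sum by auto
qed

lemma linear_proj: "linear Pm" "linear P0" "linear P1"
  unfolding Pm_def[abs_def] P0_def[abs_def] P1_def[abs_def] linear_iff
  by (auto simp: linear_add[OF linear_h] linear_scale[OF linear_h] algebra_simps)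

lemma proj_of_diff:
  assumes "w \<in> eigsp h 1" "u \<in> eigsp h (-1)"
  shows "P1 (w - u) = w" "Pm (w - u) = - u" "P0 (w - u) = 0"
proof -
  have "- u \<in> eigsp h (-1)" "0 \<in> eigsp h 0"
    using assms(2) subspace_eigsp[OF linear_h] by (auto intro: subspace_neg subspace_0)
  then show "P1 (w - u) = w" "Pm (w - u) = - u" "P0 (w - u) = 0"
    using proj_of_sum[of "- u" 0 w] assms(1) by simp_all
qed

lemma proj_eigsp: "w \<in> eigsp h 1 \<Longrightarrow> P1 w = w" "u \<in> eigsp h (-1) \<Longrightarrow> Pm u = u"
  using proj_of_diff[of w 0] proj_of_diff[of 0 "- u"] subspace_eigsp[OF linear_h]
  by (auto intro: subspace_0 subspace_neg)

lemma exp_series_sums_proj: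
  fixes f :: "complex \<Rightarrow> real"
  assumes "bounded_linear f"
  shows "(\<lambda>n. f (z ^ n / fact n) *\<^sub>R (h ^^ n) x) sums
    (f (exp (- z)) *\<^sub>R Pm x + f 1 *\<^sub>R P0 x + f (exp z) *\<^sub>R P1 x)"
proof -
  have "(h ^^ n) x = (h ^^ n) (Pm x) + (h ^^ n) (P0 x) + (h ^^ n) (P1 x)" for n
    using linear_add[OF linear_funpow[OF linear_h]] proj_sum[of x] by metis
  moreover have "(\<lambda>n. f (z ^ n / fact n) *\<^sub>R ((h ^^ n) (Pm x) + (h ^^ n) (P0 x) + (h ^^ n) (P1 x)))
      sums (f (exp (- z)) *\<^sub>R Pm x + f 1 *\<^sub>R P0 x + f (exp z) *\<^sub>R P1 x)"
    using eigsp_exp_series_sums[OF assms linear_h proj_mem(1)]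
      eigsp_exp_series_sums[OF assms linear_h proj_mem(2)]
      eigsp_exp_series_sums[OF assms linear_h proj_mem(3)]
    unfolding scaleR_add_right by (intro sums_add) simp_all
  ultimately show ?thesis by simp
qed

lemma cexp_op_proj:
  "cexp_op z h (x, 0) =
    (Re (exp (- z)) *\<^sub>R Pm x + P0 x + Re (exp z) *\<^sub>R P1 x,
     Im (exp (- z)) *\<^sub>R Pm x + Im (exp z) *\<^sub>R P1 x)"
  using sums_unique[OF exp_series_sums_proj[OF bounded_linear_Re]]
    sums_unique[OF exp_series_sums_proj[OF bounded_linear_Im]]
  by (simp add: cexp_op_def linear_0[OF linear_funpow[OF linear_h]])

lemma rexp_op_proj: "rexp_op t h x = exp (- t) *\<^sub>R Pm x + P0 x + exp t *\<^sub>R P1 x"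
  by (simp add: rexp_op_eq_fst_cexp_op cexp_op_proj Re_exp)

lemma minus_tau_proj: "- fst (cexp_op (\<i> * of_real pi) h (x, 0)) = Pm x - P0 x + P1 x"
  by (simp add: cexp_op_proj Re_exp)

lemma strip_condition_iff:
  assumes "\<And>c y. 0 < c \<Longrightarrow> y \<in> S \<Longrightarrow> c *\<^sub>R y \<in> S"
    and "\<And>c y. 0 < c \<Longrightarrow> y \<in> B \<Longrightarrow> c *\<^sub>R y \<in> B"
    and diff_iff: "\<And>w u. w \<in> eigsp h 1 \<Longrightarrow> u \<in> eigsp h (-1) \<Longrightarrow> w - u \<in> S \<longleftrightarrow> w \<in> A \<and> u \<in> B"
  shows "(\<forall>z\<in>strip_pi. snd (cexp_op z h (x, 0)) \<in> S) \<longleftrightarrow> P1 x \<in> A \<and> Pm x \<in> B"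
proof -
  have "r *\<^sub>R Pm x \<in> eigsp h (-1)" for r
    by (rule subspace_scale[OF subspace_eigsp[OF linear_h] proj_mem(1)])
  then have "(\<forall>r>0. P1 x - r *\<^sub>R Pm x \<in> S) \<longleftrightarrow> (\<forall>r>0. P1 x \<in> A \<and> r *\<^sub>R Pm x \<in> B)"
    using diff_iff proj_mem(3) by blast
  also have "\<dots> \<longleftrightarrow> P1 x \<in> A \<and> Pm x \<in> B"
    using assms(2) by (metis scaleR_one zero_less_one)
  finally show ?thesis
    using strip_pi_iff[OF assms(1)] by (simp add: cexp_op_proj)
qed

lemma decomposition_set_eq:
  assumes "A \<subseteq> eigsp h 1" "B \<subseteq> eigsp h (-1)"
  shows "{a + b + c | a b c. a \<in> A \<and> b \<in> eigsp h 0 \<and> c \<in> B} = {x. P1 x \<in> A \<and> Pm x \<in> B}"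
proof (intro set_eqI iffI)
  fix x
  assume "x \<in> {a + b + c | a b c. a \<in> A \<and> b \<in> eigsp h 0 \<and> c \<in> B}"
  then obtain a b c where "x = a + b + c" "a \<in> A" "b \<in> eigsp h 0" "c \<in> B"
    by blast
  moreover from this have "x = c + b + a"
    by (simp add: ac_simps)
  moreover have "a \<in> eigsp h 1" "c \<in> eigsp h (-1)"
    using assms \<open>a \<in> A\<close> \<open>c \<in> B\<close> by blast+
  ultimately show "x \<in> {x. P1 x \<in> A \<and> Pm x \<in> B}"
    using proj_of_sum[of c b a] by simp
next
  fix x
  assume "x \<in> {x. P1 x \<in> A \<and> Pm x \<in> B}"
  moreover have "x = P1 x + P0 x + Pm x"
    using proj_sum[of x] by (simp add: algebra_simps)
  ultimately show "x \<in> {a + b + c | a b c. a \<in> A \<and> b \<in> eigsp h 0 \<and> c \<in> B}"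
    using proj_mem(2) by blast
qed

end

locale euler_cone = euler_operator +
  fixes C :: "'a set"
  assumes closed_C: "closed C"
    and convex_cone_C: "convex_cone C"
    and generating: "{x - y | x y. x \<in> C \<and> y \<in> C} = UNIV"
    and flow_invariant: "rexp_op t h ` C \<subseteq> C"
    and tau_invariant: "(\<lambda>x. - fst (cexp_op (\<i> * of_real pi) h (x, 0))) ` C \<subseteq> C"
begin

definition C_plus :: "'a set" where "C_plus = C \<inter> eigsp h 1"
definition C_minus :: "'a set" where "C_minus = uminus ` C \<inter> eigsp h (-1)"

lemma convex_C: "convex C"
  and cone_C: "cone C"
  using convex_cone_C by (simp_all add: convex_cone_def conic_def cone_def)

lemma convex_cone_C_plus: "convex_cone C_plus"
  and convex_cone_C_minus: "convex_cone C_minus"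
  by (simp_all add: C_plus_def C_minus_def convex_cone_Int convex_cone_C convex_cone_negations
      subspace_imp_convex_cone subspace_eigsp[OF linear_h])

lemma convex_C_plus: "convex C_plus"
  and convex_C_minus: "convex C_minus"
  using convex_cone_C_plus convex_cone_C_minus by (simp_all add: convex_cone_def)

lemma closed_C_plus: "closed C_plus"
  and closed_C_minus: "closed C_minus"
  by (simp_all add: C_plus_def C_minus_def closed_Int closed_C closed_negations
      closed_subspace subspace_eigsp[OF linear_h])

lemma flow_scaled_mem:
  assumes "x \<in> C" "0 < s"
  shows "s *\<^sub>R Pm x + P0 x + inverse s *\<^sub>R P1 x \<in> C"
  using flow_invariant[of "- ln s"] assms by (auto simp: rexp_op_proj exp_minus)

lemma P1_mem:
  assumes "x \<in> C"
  shows "P1 x \<in> C"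
proof -
  have "(s * s) *\<^sub>R Pm x + s *\<^sub>R P0 x + P1 x \<in> C" if "0 < s" for s
    using convex_cone_scaleR[OF convex_cone_C _ flow_scaled_mem[OF assms that], of s] that
    by (simp add: scaleR_add_right)
  then show ?thesis
    using closed_mem_of_right_limit[OF closed_C, of "\<lambda>s. (s * s) *\<^sub>R Pm x + s *\<^sub>R P0 x + P1 x"]
    by (simp add: continuous_intros)
qed

lemma Pm_mem:
  assumes "x \<in> C"
  shows "Pm x \<in> C"
proof -
  have "Pm x + s *\<^sub>R P0 x + (s * s) *\<^sub>R P1 x \<in> C" if "0 < s" for s
    using convex_cone_scaleR[OF convex_cone_C _ flow_scaled_mem[OF assms, of "inverse s"], of s] that
    by (simp add: scaleR_add_right)
  then show ?thesis
    using closed_mem_of_right_limit[OF closed_C, of "\<lambda>s. Pm x + s *\<^sub>R P0 x + (s * s) *\<^sub>R P1 x"]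
    by (simp add: continuous_intros)
qed

lemma diff_mem_iff:
  assumes "w \<in> eigsp h 1" "u \<in> eigsp h (-1)"
  shows "w - u \<in> C \<longleftrightarrow> w \<in> C_plus \<and> u \<in> C_minus"
proof
  assume "w - u \<in> C"
  then have "w \<in> C" "- u \<in> C"
    using P1_mem Pm_mem proj_of_diff[OF assms] by metis+
  then show "w \<in> C_plus \<and> u \<in> C_minus"
    using assms by (force simp: C_plus_def C_minus_def)
next
  assume "w \<in> C_plus \<and> u \<in> C_minus"
  then have "w + (- u) \<in> C"
    by (auto simp: C_plus_def C_minus_def intro: convex_cone_add[OF convex_cone_C])
  then show "w - u \<in> C"
    by simp
qed

lemma affine_hull_C_plus: "affine hull C_plus = eigsp h 1"
proof (rule affine_hull_eq_subspace[OF subspace_eigsp[OF linear_h]])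
  show "C_plus \<subseteq> eigsp h 1" "0 \<in> C_plus"
    using convex_cone_contains_0[OF convex_cone_C_plus] by (auto simp: C_plus_def)
  fix y
  assume "y \<in> eigsp h 1"
  obtain a b where "y = a - b" "a \<in> C" "b \<in> C"
    using generating by blast
  then have "y = P1 a - P1 b" "P1 a \<in> C_plus" "P1 b \<in> C_plus"
    using proj_eigsp(1)[OF \<open>y \<in> eigsp h 1\<close>] linear_diff[OF linear_proj(3)] P1_mem proj_mem(3)
    by (auto simp: C_plus_def)
  then show "\<exists>a\<in>C_plus. \<exists>b\<in>C_plus. y = a - b"
    by blast
qed

lemma affine_hull_C_minus: "affine hull C_minus = eigsp h (-1)"
proof (rule affine_hull_eq_subspace[OF subspace_eigsp[OF linear_h]])
  show "C_minus \<subseteq> eigsp h (-1)" "0 \<in> C_minus"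
    using convex_cone_contains_0[OF convex_cone_C_minus] by (auto simp: C_minus_def)
  fix y
  assume "y \<in> eigsp h (-1)"
  obtain a b where "y = a - b" "a \<in> C" "b \<in> C"
    using generating by blast
  then have "y = (- Pm b) - (- Pm a)" "- Pm a \<in> C_minus" "- Pm b \<in> C_minus"
    using proj_eigsp(2)[OF \<open>y \<in> eigsp h (-1)\<close>] linear_diff[OF linear_proj(1)] Pm_mem proj_mem(1)
      subspace_neg[OF subspace_eigsp[OF linear_h]]
    by (auto simp: C_minus_def)
  then show "\<exists>a\<in>C_minus. \<exists>b\<in>C_minus. y = a - b"
    by blast
qed

lemma interior_eq_rel_interior: "interior C = rel_interior C"
proof -
  have "affine hull C = UNIV"
    using affine_hull_eq_subspace[OF subspace_UNIV _ convex_cone_contains_0[OF convex_cone_C]] generating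
    by blast
  then show ?thesis
    by (simp add: rel_interior_interior)
qed

lemma interior_scaleR: "0 < c \<Longrightarrow> y \<in> interior C \<Longrightarrow> c *\<^sub>R y \<in> interior C"
  using rel_interior_cone_scaleR[OF cone_C] by (simp add: interior_eq_rel_interior)

lemma reflection_interior:
  assumes "y \<in> interior C"
  shows "Pm y - P0 y + P1 y \<in> interior C"
proof -
  define \<sigma> where "\<sigma> x = Pm x - P0 x + P1 x" for x
  have "linear \<sigma>"
    unfolding \<sigma>_def[abs_def] linear_iff
    by (simp add: linear_add[OF linear_proj(1)] linear_add[OF linear_proj(2)] linear_add[OF linear_proj(3)]
        linear_scale[OF linear_proj(1)] linear_scale[OF linear_proj(2)] linear_scale[OF linear_proj(3)] algebra_simps)
  have "\<sigma> (\<sigma> x) = x" for x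
  proof -
    have "\<sigma> x = Pm x + (- P0 x) + P1 x"
      by (simp add: \<sigma>_def)
    then have "Pm (\<sigma> x) = Pm x" "P0 (\<sigma> x) = - P0 x" "P1 (\<sigma> x) = P1 x"
      using proj_of_sum proj_mem subspace_neg[OF subspace_eigsp[OF linear_h]] by metis+
    then show ?thesis
      using proj_sum[of x] by (simp add: \<sigma>_def)
  qed
  then have "inj \<sigma>"
    by (metis injI)
  have "\<sigma> ` C \<subseteq> C"
    using tau_invariant by (auto simp: \<sigma>_def minus_tau_proj)
  then have "\<sigma> ` interior C \<subseteq> interior C"
    using interior_mono interior_injective_linear_image[OF \<open>linear \<sigma>\<close> \<open>inj \<sigma>\<close>] by metis
  then show ?thesis
    using assms by (auto simp: \<sigma>_def)
qed

lemma interior_meets_kernel: "interior C \<inter> {x. P0 x = 0} \<noteq> {}"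
proof -
  obtain y where y: "y \<in> interior C"
    using rel_interior_eq_empty[OF convex_C] convex_cone_contains_0[OF convex_cone_C]
    by (auto simp: interior_eq_rel_interior)
  define m where "m = (1/2) *\<^sub>R y + (1/2) *\<^sub>R (Pm y - P0 y + P1 y)"
  have "m \<in> interior C"
    unfolding m_def using convexD[OF convex_interior[OF convex_C] y reflection_interior[OF y]]
    by simp
  moreover have "m = (1/2) *\<^sub>R (Pm y + P0 y + P1 y) + (1/2) *\<^sub>R (Pm y - P0 y + P1 y)"
    by (simp add: m_def proj_sum)
  then have "m = P1 y - (- Pm y)"
    by (simp add: algebra_simps flip: scaleR_add_left)
  then have "P0 m = 0"
    using proj_of_diff proj_mem subspace_neg[OF subspace_eigsp[OF linear_h]] by metis
  ultimately show ?thesis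
    by blast
qed

lemma C_Int_kernel: "C \<inter> {x. P0 x = 0} = C_plus + uminus ` C_minus"
proof (intro set_eqI iffI)
  fix x
  assume x: "x \<in> C \<inter> {x. P0 x = 0}"
  then have "x = P1 x + - (- Pm x)"
    using proj_sum[of x] by (simp add: algebra_simps)
  moreover have "P1 x \<in> C_plus" "- Pm x \<in> C_minus"
    using x P1_mem Pm_mem proj_mem subspace_neg[OF subspace_eigsp[OF linear_h]]
    by (auto simp: C_plus_def C_minus_def)
  ultimately show "x \<in> C_plus + uminus ` C_minus"
    by (metis image_eqI set_plus_intro)
next
  fix x
  assume "x \<in> C_plus + uminus ` C_minus"
  then obtain w u where "x = w - u" "w \<in> C_plus" "u \<in> C_minus"
    by (auto simp: set_plus_def)
  then show "x \<in> C \<inter> {x. P0 x = 0}"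
    using diff_mem_iff proj_of_diff(3) by (auto simp: C_plus_def C_minus_def)
qed

lemma interior_Int_kernel:
  "interior C \<inter> {x. P0 x = 0} = rel_interior C_plus + uminus ` rel_interior C_minus"
proof -
  have "affine {x. P0 x = 0}"
    using linear_proj(2) by (simp add: subspace_imp_affine subspace_def linear_0 linear_add linear_scale)
  then have "interior C \<inter> {x. P0 x = 0} = rel_interior (C_plus + uminus ` C_minus)"
    using rel_interior_convex_Int_affine[OF convex_C _ interior_meets_kernel] C_Int_kernel by simp
  also have "\<dots> = rel_interior C_plus + uminus ` rel_interior C_minus"
    using rel_interior_sum[OF convex_C_plus convex_negations[OF convex_C_minus]]
      rel_interior_injective_linear_image[OF bounded_linear_minus[OF bounded_linear_ident] inj_uminus, of C_minus]
    by simp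
  finally show ?thesis .
qed

lemma diff_mem_interior_iff:
  assumes "w \<in> eigsp h 1" "u \<in> eigsp h (-1)"
  shows "w - u \<in> interior C \<longleftrightarrow> w \<in> rel_interior C_plus \<and> u \<in> rel_interior C_minus"
proof -
  have "w - u \<in> interior C \<longleftrightarrow> w - u \<in> rel_interior C_plus + uminus ` rel_interior C_minus"
    using interior_Int_kernel proj_of_diff(3)[OF assms] by blast
  also have "\<dots> \<longleftrightarrow> w \<in> rel_interior C_plus \<and> u \<in> rel_interior C_minus"
  proof
    assume "w - u \<in> rel_interior C_plus + uminus ` rel_interior C_minus"
    then obtain a b where ab: "w - u = a - b" "a \<in> rel_interior C_plus" "b \<in> rel_interior C_minus"
      by (auto simp: set_plus_def)
    then have "a \<in> eigsp h 1" "b \<in> eigsp h (-1)"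
      using rel_interior_subset by (auto simp: C_plus_def C_minus_def)
    then have "a = w" "b = u"
      using proj_of_diff[OF assms] proj_of_diff[of a b] ab(1) by simp_all
    then show "w \<in> rel_interior C_plus \<and> u \<in> rel_interior C_minus"
      using ab by simp
  next
    assume "w \<in> rel_interior C_plus \<and> u \<in> rel_interior C_minus"
    then have "w + - u \<in> rel_interior C_plus + uminus ` rel_interior C_minus"
      by (intro set_plus_intro) auto
    then show "w - u \<in> rel_interior C_plus + uminus ` rel_interior C_minus"
      by simp
  qed
  finally show ?thesis .
qed

lemma strip_interior_iff:
  "(\<forall>z\<in>strip_pi. snd (cexp_op z h (x, 0)) \<in> interior C)
    \<longleftrightarrow> P1 x \<in> rel_interior C_plus \<and> Pm x \<in> rel_interior C_minus"
  by (rule strip_condition_iff[OF interior_scaleR rel_interior_cone_scaleR diff_mem_interior_iff])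
    (use convex_cone_C_minus in \<open>simp_all add: convex_cone_def conic_def cone_def\<close>)

lemma strip_iff:
  "(\<forall>z\<in>strip_pi. snd (cexp_op z h (x, 0)) \<in> C) \<longleftrightarrow> P1 x \<in> C_plus \<and> Pm x \<in> C_minus"
  by (rule strip_condition_iff[OF _ _ diff_mem_iff])
    (simp_all add: convex_cone_scaleR[OF convex_cone_C] convex_cone_scaleR[OF convex_cone_C_minus])

lemma closure_components:
  "closure {x. P1 x \<in> rel_interior C_plus \<and> Pm x \<in> rel_interior C_minus}
    = {x. P1 x \<in> C_plus \<and> Pm x \<in> C_minus}"
proof -
  let ?f = "\<lambda>x. (P1 x, Pm x)"
  have convex: "convex (C_plus \<times> C_minus)"
    by (rule convex_Times[OF convex_C_plus convex_C_minus])
  have "linear ?f"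
    using linear_proj by (simp add: bounded_linear.linear bounded_linear_Pair linear_conv_bounded_linear)
  have "rel_interior C_plus \<noteq> {}" "rel_interior C_minus \<noteq> {}"
    using convex_cone_contains_0[OF convex_cone_C_plus] convex_cone_contains_0[OF convex_cone_C_minus]
    by (auto simp: rel_interior_eq_empty convex_C_plus convex_C_minus)
  then obtain a b where ab: "a \<in> rel_interior C_plus" "b \<in> rel_interior C_minus"
    by blast
  then have "a \<in> eigsp h 1" "b \<in> eigsp h (-1)"
    using rel_interior_subset by (auto simp: C_plus_def C_minus_def)
  then have "?f (b + 0 + a) \<in> rel_interior (C_plus \<times> C_minus)"
    using ab proj_of_sum[of b 0 a] subspace_0[OF subspace_eigsp[OF linear_h]]
      rel_interior_Times[OF convex_C_plus convex_C_minus]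
    by simp
  then have "closure (?f -` rel_interior (C_plus \<times> C_minus)) = ?f -` closure (C_plus \<times> C_minus)"
    by (rule closure_vimage_rel_interior[OF \<open>linear ?f\<close> convex])
  moreover have "?f -` rel_interior (C_plus \<times> C_minus)
      = {x. P1 x \<in> rel_interior C_plus \<and> Pm x \<in> rel_interior C_minus}"
    by (auto simp: rel_interior_Times[OF convex_C_plus convex_C_minus])
  moreover have "?f -` closure (C_plus \<times> C_minus) = {x. P1 x \<in> C_plus \<and> Pm x \<in> C_minus}"
    by (auto simp: closure_Times closed_C_plus closed_C_minus)
  ultimately show ?thesis
    by (simp only:)
qed

end

theorem lemma3p3:
  fixes h :: "'a::euclidean_space \<Rightarrow> 'a" and C :: "'a set"
  assumes h_lin: "linear h"
    and h_diag: "\<forall>x. \<exists>u v w. x = u + v + w \<and> u \<in> eigsp h (-1) \<and> v \<in> eigsp h 0 \<and> w \<in> eigsp h 1"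
    and C_closed: "closed C"
    and C_cone: "convex_cone C"
    and C_pointed: "C \<inter> uminus ` C = {0}"
    and C_gen: "{x - y | x y. x \<in> C \<and> y \<in> C} = UNIV"
    and C_inv_exp: "\<forall>t::real. rexp_op t h ` C = C"
    and C_inv_tau: "(\<lambda>x. - fst (cexp_op (\<i> * of_real pi) h (x, 0))) ` C = C"
  defines "Cp \<equiv> C \<inter> eigsp h 1"
    and "Cm \<equiv> uminus ` C \<inter> eigsp h (-1)"
  defines "Cp0 \<equiv> top_of_set (eigsp h 1) interior_of Cp"
    and "Cm0 \<equiv> top_of_set (eigsp h (-1)) interior_of Cm"
  defines "W \<equiv> {a + b + c | a b c. a \<in> Cp0 \<and> b \<in> eigsp h 0 \<and> c \<in> Cm0}"
  shows "W = {x. \<forall>z\<in>strip_pi. snd (cexp_op z h (x, 0)) \<in> interior C}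
       \<and> closure W = {x. \<forall>z\<in>strip_pi. snd (cexp_op z h (x, 0)) \<in> C}"
proof -
  interpret euler_cone h C
    using C_closed C_cone C_gen C_inv_exp C_inv_tau
    by (intro euler_cone.intro euler_operator.intro euler_cone_axioms.intro h_lin h_diag) auto
  have interiors: "Cp0 = rel_interior C_plus" "Cm0 = rel_interior C_minus"
    unfolding Cp0_def Cm0_def Cp_def Cm_def C_plus_def[symmetric] C_minus_def[symmetric]
    using interior_of_affine_hull[of C_plus, unfolded affine_hull_C_plus]
      interior_of_affine_hull[of C_minus, unfolded affine_hull_C_minus] .
  have "W = {x. P1 x \<in> rel_interior C_plus \<and> Pm x \<in> rel_interior C_minus}"
    unfolding W_def interiors
    by (intro decomposition_set_eq) (use rel_interior_subset in \<open>auto simp: C_plus_def C_minus_def\<close>)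
  then show ?thesis
    by (simp add: strip_interior_iff strip_iff closure_components)
qed

end
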